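(* Let $p\in(1,\infty]$ and $\lambda>0$. Every metric space with property $\lambda$-HIC$_p$ has property $\lambda$-HC$_p$, and every metric space with property $\lambda$-HC$_p$ has property $2\lambda$-HIC$_p$. In particular, properties HC$_p$ and HIC$_p$ are equivalent.
   Context: For infinite $\mathbb M\subseteq\mathbb N$ and $k\in\mathbb N$, $[\mathbb M]^k$ is the set of $\bar n=(n_1,\dots,n_k)\in\mathbb M^k$ with $n_1<\dots<n_k$, with Hamming distance $d_{\mathbb H}(\bar n,\bar m)=|\{j:n_j\ne m_j\}|$; $I_k(\mathbb M)=\{(\bar n,\bar m)\in([\mathbb M]^k)^2: n_1<m_1<n_2<m_2<\dots<n_k<m_k\}$. Convention $1/\infty=0$. For a metric space $(M,d)$, $p\in(1,\infty]$, $\lambda>0$: $M$ has $\lambda$-HIC$_p$ if for every $k\in\mathbb N$ and every Lipschitz $f:([\mathbb N]^k,d_{\mathbb H})\to M$ there is $(\bar n,\bar m)\in I_k(\mathbb N)$ with $d(f(\bar n),f(\bar m))\le\lambda k^{1/p}\mathrm{Lip}(f)$. $M$ has $\lambda$-HC$_p$ if for every $k$ and every such $f$ there are $\bar n,\bar m\in[\mathbb N]^k$ with $\bar n\cap\bar m=\varnothing$ (as sets) and $d(f(\bar n),f(\bar m))\le\lambda k^{1/p}\mathrm{Lip}(f)$. HC$_p$ (resp. HIC$_p$) means $\lambda$-HC$_p$ (resp. $\lambda$-HIC$_p$) for some $\lambda>0$. *)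

theory Defs
  imports "HOL-Analysis.Analysis"
begin

definition incr_tuples :: "nat \<Rightarrow> nat list set" where
  "incr_tuples k = {xs. length xs = k \<and> sorted_wrt (<) xs}"

definition hamming :: "nat list \<Rightarrow> nat list \<Rightarrow> nat" where
  "hamming xs ys = card {j. j < length xs \<and> xs ! j \<noteq> ys ! j}"

definition interlaced :: "nat \<Rightarrow> nat list \<Rightarrow> nat list \<Rightarrow> bool" where
  "interlaced k xs ys \<longleftrightarrow> xs \<in> incr_tuples k \<and> ys \<in> incr_tuples k \<and>
     (\<forall>j<k. xs ! j < ys ! j) \<and> (\<forall>j. Suc j < k \<longrightarrow> ys ! j < xs ! Suc j)"

definition tuple_lipschitz :: "'a set \<Rightarrow> ('a \<Rightarrow> 'a \<Rightarrow> real) \<Rightarrow> nat \<Rightarrow> (nat list \<Rightarrow> 'a) \<Rightarrow> bool" where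
  "tuple_lipschitz M d k f \<longleftrightarrow> f ` incr_tuples k \<subseteq> M \<and>
     (\<exists>L. \<forall>xs\<in>incr_tuples k. \<forall>ys\<in>incr_tuples k. d (f xs) (f ys) \<le> L * real (hamming xs ys))"

definition tuple_lip :: "('a \<Rightarrow> 'a \<Rightarrow> real) \<Rightarrow> nat \<Rightarrow> (nat list \<Rightarrow> 'a) \<Rightarrow> real" where
  "tuple_lip d k f = Sup {d (f xs) (f ys) / real (hamming xs ys) | xs ys.
      xs \<in> incr_tuples k \<and> ys \<in> incr_tuples k \<and> xs \<noteq> ys}"

text \<open>Exponent 1/p with the convention 1/\<infinity> = 0.\<close>
definition inv_exp :: "ereal \<Rightarrow> real" where
  "inv_exp p = real_of_ereal (1 / p)"

definition HIC :: "ereal \<Rightarrow> real \<Rightarrow> 'a set \<Rightarrow> ('a \<Rightarrow> 'a \<Rightarrow> real) \<Rightarrow> bool" where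
  "HIC p lam M d \<longleftrightarrow> (\<forall>k\<ge>1. \<forall>f. tuple_lipschitz M d k f \<longrightarrow>
     (\<exists>xs ys. interlaced k xs ys \<and>
        d (f xs) (f ys) \<le> lam * real k powr inv_exp p * tuple_lip d k f))"

definition HC :: "ereal \<Rightarrow> real \<Rightarrow> 'a set \<Rightarrow> ('a \<Rightarrow> 'a \<Rightarrow> real) \<Rightarrow> bool" where
  "HC p lam M d \<longleftrightarrow> (\<forall>k\<ge>1. \<forall>f. tuple_lipschitz M d k f \<longrightarrow>
     (\<exists>xs ys. xs \<in> incr_tuples k \<and> ys \<in> incr_tuples k \<and> set xs \<inter> set ys = {} \<and>
        d (f xs) (f ys) \<le> lam * real k powr inv_exp p * tuple_lip d k f))"

end

(*
  Interlaced pairs are disjoint, so HIC gives HC with the same constant. Conversely, fix f and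
  delta = lambda k^(1/p) Lip(f). By Ramsey's theorem there is a subsequence e of N along which
  whether two disjoint tuples have delta-close images depends only on their relative position.
  HC applied to f restricted to e, whose Lipschitz constant is at most Lip(f), yields one close
  disjoint pair (x, y), hence every pair in the same relative position is close. Spreading x
  and y onto the even positions of e and then moving x onto the odd ones produces close pairs
  (a, c) and (b, c) with a, b interlaced, and d(f a, f b) <= 2 delta by the triangle inequality.
*)
theory Submission
  imports Defs "HOL-Library.Ramsey"
begin

lemma Ramsey_finite_colours:
  fixes col :: "'a set \<Rightarrow> 'b"
  assumes "infinite Z" and "finite C" and "col ` [Z]\<^bsup>r\<^esup> \<subseteq> C"
  obtains Y c where "Y \<subseteq> Z" "infinite Y" "col ` [Y]\<^bsup>r\<^esup> \<subseteq> {c}"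
proof -
  obtain h where h: "bij_betw h C {..<card C}"
    using ex_bij_betw_finite_nat[OF assms(2)] atLeast0LessThan by metis
  have "(h \<circ> col) ` [Z]\<^bsup>r\<^esup> \<subseteq> {..<card C}"
    using image_mono[OF assms(3), of h] bij_betw_imp_surj_on[OF h] by (simp add: image_comp)
  then obtain Y t where Y: "Y \<subseteq> Z" "infinite Y" "(h \<circ> col) ` [Y]\<^bsup>r\<^esup> \<subseteq> {t}"
    by (rule Ramsey_nsets[OF assms(1)])
  have "col X = col X'" if "X \<in> [Y]\<^bsup>r\<^esup>" "X' \<in> [Y]\<^bsup>r\<^esup>" for X X'
  proof -
    have "X \<in> [Z]\<^bsup>r\<^esup>" "X' \<in> [Z]\<^bsup>r\<^esup>" using that nsets_mono[OF Y(1)] by auto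
    then have "col X \<in> C" "col X' \<in> C" using assms(3) by auto
    moreover have "h (col X) = h (col X')" using Y(3) that by auto
    ultimately show ?thesis
      using bij_betw_imp_inj_on[OF h] by (simp add: inj_on_eq_iff)
  qed
  then have "col ` [Y]\<^bsup>r\<^esup> \<subseteq> {col (SOME X. X \<in> [Y]\<^bsup>r\<^esup>)}"
    by (metis (mono_tags, lifting) image_subset_iff singletonI someI)
  with Y(1,2) show thesis by (rule that)
qed

lemma Ramsey_strict_mono:
  fixes col :: "nat set \<Rightarrow> 'b"
  assumes "finite C" and "col ` [UNIV]\<^bsup>r\<^esup> \<subseteq> C"
  obtains e :: "nat \<Rightarrow> nat" and c where "strict_mono e"
    "\<And>S. finite S \<Longrightarrow> card S = r \<Longrightarrow> col (e ` S) = c"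
proof -
  obtain Y c where Y: "infinite Y" "col ` [Y]\<^bsup>r\<^esup> \<subseteq> {c}"
    by (rule Ramsey_finite_colours[OF infinite_UNIV_nat assms])
  have e: "strict_mono (enumerate Y)"
    using Y(1) by (simp add: strict_mono_def enumerate_mono)
  have "col (enumerate Y ` S) = c" if "finite S" "card S = r" for S
  proof -
    have "card (enumerate Y ` S) = r"
      using that card_image[OF strict_mono_imp_inj_on[OF e]] by simp
    then have "enumerate Y ` S \<in> [Y]\<^bsup>r\<^esup>"
      using that enumerate_in_set[OF Y(1)] by (auto simp: nsets_def)
    then show ?thesis using Y(2) by blast
  qed
  with e show thesis by (rule that)
qed

lemma sorted_list_of_set_eqI:
  "sorted_wrt (<) xs \<Longrightarrow> set xs = A \<Longrightarrow> sorted_list_of_set A = xs"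
  by (metis strict_sorted_equal strict_sorted_list_of_set set_sorted_list_of_set List.finite_set)

lemma sorted_list_of_set_image_strict_mono:
  assumes "strict_mono \<phi>" and "finite S"
  shows "sorted_list_of_set (\<phi> ` S) = map \<phi> (sorted_list_of_set S)"
proof (rule sorted_list_of_set_eqI)
  show "sorted_wrt (<) (map \<phi> (sorted_list_of_set S))"
    using strict_sorted_list_of_set[of S] assms(1)
    by (auto simp: sorted_wrt_map strict_mono_less elim: sorted_wrt_mono_rel[rotated])
qed (use assms(2) in simp)

lemma filter_sorted_list_of_set:
  assumes "finite A" and "sorted_wrt (<) xs" and "set xs = {t \<in> A. P t}"
  shows "filter P (sorted_list_of_set A) = xs"
  using assms strict_sorted_equal[OF assms(2) sorted_wrt_filter[OF strict_sorted_list_of_set]]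
  by auto

lemma card_set_incr_tuples: "xs \<in> incr_tuples k \<Longrightarrow> card (set xs) = k"
  by (auto simp: incr_tuples_def strict_sorted_iff distinct_card)

lemma map_incr_tuples: "strict_mono \<phi> \<Longrightarrow> xs \<in> incr_tuples k \<Longrightarrow> map \<phi> xs \<in> incr_tuples k"
  by (auto simp: incr_tuples_def sorted_wrt_map strict_mono_less elim: sorted_wrt_mono_rel[rotated])

lemma nths_sorted_list_of_set_image_Un:
  assumes "strict_mono \<psi>" "xs \<in> incr_tuples k" "ys \<in> incr_tuples k" "set xs \<inter> set ys = {}"
  defines "Q \<equiv> {i. i < 2*k \<and> sorted_list_of_set (set xs \<union> set ys) ! i \<in> set xs}"
  shows "nths (sorted_list_of_set (\<psi> ` (set xs \<union> set ys))) Q = map \<psi> xs"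
    and "nths (sorted_list_of_set (\<psi> ` (set xs \<union> set ys))) ({..<2*k} - Q) = map \<psi> ys"
proof -
  define s where "s = sorted_list_of_set (set xs \<union> set ys)"
  have "length s = 2*k"
    using assms(2-4) by (simp add: s_def card_Un_disjoint card_set_incr_tuples)
  then have "nths s Q = filter (\<lambda>t. t \<in> set xs) s"
    and "nths s ({..<2*k} - Q) = filter (\<lambda>t. t \<notin> set xs) s"
    unfolding Q_def s_def[symmetric] by (auto simp: filter_eq_nths intro!: arg_cong[where f = "nths s"])
  moreover have "filter (\<lambda>t. t \<in> set xs) s = xs" "filter (\<lambda>t. t \<notin> set xs) s = ys"
    unfolding s_def using assms(2-4) by (auto simp: incr_tuples_def intro!: filter_sorted_list_of_set)
  moreover have "sorted_list_of_set (\<psi> ` (set xs \<union> set ys)) = map \<psi> s"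
    unfolding s_def using assms(1) by (simp add: sorted_list_of_set_image_strict_mono)
  ultimately show "nths (sorted_list_of_set (\<psi> ` (set xs \<union> set ys))) Q = map \<psi> xs"
    and "nths (sorted_list_of_set (\<psi> ` (set xs \<union> set ys))) ({..<2*k} - Q) = map \<psi> ys"
    by (simp_all add: nths_map)
qed

lemma Ramsey_disjoint_tuples:
  fixes R :: "nat list \<Rightarrow> nat list \<Rightarrow> bool"
  obtains e :: "nat \<Rightarrow> nat" where "strict_mono e"
    "\<And>xs ys \<phi>. xs \<in> incr_tuples k \<Longrightarrow> ys \<in> incr_tuples k \<Longrightarrow> set xs \<inter> set ys = {} \<Longrightarrow>
       strict_mono \<phi> \<Longrightarrow> R (map (\<lambda>t. e (\<phi> t)) xs) (map (\<lambda>t. e (\<phi> t)) ys) \<longleftrightarrow> R (map e xs) (map e ys)"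
proof -
  define col where "col S = {Q \<in> Pow {..<2*k}. R (nths (sorted_list_of_set S) Q)
    (nths (sorted_list_of_set S) ({..<2*k} - Q))}" for S
  have colours: "col ` nsets UNIV (2*k) \<subseteq> Pow (Pow {..<2*k})"
    by (auto simp: col_def)
  have finite_colours: "finite (Pow (Pow {..<2*k}))"
    by simp
  obtain e :: "nat \<Rightarrow> nat" and c where e: "strict_mono e"
    and hom: "\<And>S. finite S \<Longrightarrow> card S = 2*k \<Longrightarrow> col (e ` S) = c"
    by (rule Ramsey_strict_mono[OF finite_colours colours]) blast
  have pattern: "R (map \<psi> xs) (map \<psi> ys) \<longleftrightarrow>
      {i. i < 2*k \<and> sorted_list_of_set (set xs \<union> set ys) ! i \<in> set xs} \<in> col (\<psi> ` (set xs \<union> set ys))"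
    if "strict_mono \<psi>" "xs \<in> incr_tuples k" "ys \<in> incr_tuples k" "set xs \<inter> set ys = {}" for \<psi> xs ys
    using nths_sorted_list_of_set_image_Un[OF that] by (auto simp: col_def)
  show thesis
  proof (rule that[OF e])
    fix xs ys and \<phi> :: "nat \<Rightarrow> nat"
    assume tuples: "xs \<in> incr_tuples k" "ys \<in> incr_tuples k" "set xs \<inter> set ys = {}"
      and \<phi>: "strict_mono \<phi>"
    define S where "S = set xs \<union> set ys"
    have "card S = 2*k"
      using tuples by (simp add: S_def card_Un_disjoint card_set_incr_tuples)
    moreover have "card (\<phi> ` S) = card S"
      using card_image[OF strict_mono_imp_inj_on[OF \<phi>]] by simp
    ultimately have "col (e ` \<phi> ` S) = col (e ` S)"
      using hom[of S] hom[of "\<phi> ` S"] by (simp add: S_def)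
    then have "col ((e \<circ> \<phi>) ` S) = col (e ` S)"
      by (simp only: image_comp)
    then show "R (map (\<lambda>t. e (\<phi> t)) xs) (map (\<lambda>t. e (\<phi> t)) ys) \<longleftrightarrow> R (map e xs) (map e ys)"
      using pattern[OF strict_mono_o[OF e \<phi>] tuples] pattern[OF e tuples]
      by (simp add: S_def comp_def)
  qed
qed

lemma hamming_map_inj:
  assumes "inj e" and "length xs = length ys"
  shows "hamming (map e xs) (map e ys) = hamming xs ys"
  using assms unfolding hamming_def by (auto simp: inj_eq intro!: arg_cong[where f = card])

lemma hamming_pos:
  assumes "length xs = length ys" and "xs \<noteq> ys"
  shows "0 < hamming xs ys"
proof -
  obtain j where "j < length xs" "xs ! j \<noteq> ys ! j"
    using assms nth_equalityI by blast
  then show ?thesis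
    unfolding hamming_def by (auto simp: card_gt_0_iff)
qed

lemma tuple_lipschitz_compose_strict_mono:
  assumes e: "strict_mono e" and f: "tuple_lipschitz M d k f"
  shows "tuple_lipschitz M d k (f \<circ> map e)"
proof -
  obtain L where L: "\<forall>xs\<in>incr_tuples k. \<forall>ys\<in>incr_tuples k. d (f xs) (f ys) \<le> L * real (hamming xs ys)"
    using f unfolding tuple_lipschitz_def by blast
  have "d (f (map e xs)) (f (map e ys)) \<le> L * real (hamming xs ys)"
    if "xs \<in> incr_tuples k" "ys \<in> incr_tuples k" for xs ys
  proof -
    have "length xs = length ys"
      using that by (simp add: incr_tuples_def)
    then have "hamming (map e xs) (map e ys) = hamming xs ys"
      using hamming_map_inj[OF strict_mono_imp_inj_on[OF e]] by simp
    then show ?thesis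
      using L[rule_format, OF map_incr_tuples[OF e that(1)] map_incr_tuples[OF e that(2)]] by simp
  qed
  moreover have "(f \<circ> map e) ` incr_tuples k \<subseteq> M"
    using f map_incr_tuples[OF e] by (auto simp: tuple_lipschitz_def)
  ultimately show ?thesis
    unfolding tuple_lipschitz_def by auto
qed

lemma tuple_lip_compose_strict_mono:
  assumes e: "strict_mono e" and k: "1 \<le> k" and f: "tuple_lipschitz M d k f"
  shows "tuple_lip d k (f \<circ> map e) \<le> tuple_lip d k f"
proof -
  define ratios where "ratios g = {d (g xs) (g ys) / real (hamming xs ys) | xs ys.
    xs \<in> incr_tuples k \<and> ys \<in> incr_tuples k \<and> xs \<noteq> ys}" for g :: "nat list \<Rightarrow> 'a"
  have "[0..<k] \<in> incr_tuples k"
    by (simp add: incr_tuples_def)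
  moreover from this have "map Suc [0..<k] \<in> incr_tuples k"
    by (rule map_incr_tuples[rotated]) (simp add: strict_mono_Suc_iff)
  moreover have "map Suc [0..<k] \<noteq> [0..<k]"
    using k by (simp add: upt_conv_Cons)
  ultimately have "ratios (f \<circ> map e) \<noteq> {}"
    unfolding ratios_def by blast
  moreover obtain L where L: "\<forall>xs\<in>incr_tuples k. \<forall>ys\<in>incr_tuples k. d (f xs) (f ys) \<le> L * real (hamming xs ys)"
    using f unfolding tuple_lipschitz_def by blast
  have "r \<le> L" if "r \<in> ratios f" for r
  proof -
    obtain xs ys where r: "r = d (f xs) (f ys) / real (hamming xs ys)"
      and tuples: "xs \<in> incr_tuples k" "ys \<in> incr_tuples k" "xs \<noteq> ys"
      using \<open>r \<in> ratios f\<close> unfolding ratios_def by auto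
    have "0 < hamming xs ys"
      using tuples by (auto simp: incr_tuples_def intro: hamming_pos)
    then show ?thesis
      using L tuples by (simp add: r divide_le_eq)
  qed
  then have "bdd_above (ratios f)"
    by (rule bdd_aboveI)
  moreover have "ratios (f \<circ> map e) \<subseteq> ratios f"
  proof
    fix r assume "r \<in> ratios (f \<circ> map e)"
    then obtain xs ys where r: "r = d (f (map e xs)) (f (map e ys)) / real (hamming xs ys)"
      and tuples: "xs \<in> incr_tuples k" "ys \<in> incr_tuples k" "xs \<noteq> ys"
      unfolding ratios_def by auto
    have "inj e" using e by (rule strict_mono_imp_inj_on)
    then have "map e xs \<noteq> map e ys" and "hamming (map e xs) (map e ys) = hamming xs ys"
      using tuples by (auto simp: inj_map_eq_map hamming_map_inj incr_tuples_def)
    moreover have "r = d (f (map e xs)) (f (map e ys)) / real (hamming (map e xs) (map e ys))"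
      using r calculation by simp
    ultimately show "r \<in> ratios f"
      unfolding ratios_def using map_incr_tuples[OF e tuples(1)] map_incr_tuples[OF e tuples(2)] by blast
  qed
  ultimately show ?thesis
    unfolding tuple_lip_def ratios_def[symmetric] by (rule cSup_subset_mono)
qed

lemma interlaced_disjoint:
  assumes "interlaced k xs ys"
  shows "set xs \<inter> set ys = {}"
proof -
  have sorted: "sorted xs" and lengths: "length xs = k" "length ys = k"
    and below: "\<And>j. j < k \<Longrightarrow> xs ! j < ys ! j"
    and above: "\<And>j. Suc j < k \<Longrightarrow> ys ! j < xs ! Suc j"
    using assms by (auto simp: interlaced_def incr_tuples_def strict_sorted_iff)
  have "xs ! i \<noteq> ys ! j" if "i < k" "j < k" for i j
  proof (cases "i \<le> j")
    case True
    then have "xs ! i \<le> xs ! j" using sorted_nth_mono[OF sorted] that lengths by simp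
    then show ?thesis using below[OF that(2)] by simp
  next
    case False
    then have "xs ! Suc j \<le> xs ! i" using sorted_nth_mono[OF sorted] that lengths by simp
    then show ?thesis using above[of j] that False by simp
  qed
  then show ?thesis
    using lengths by (fastforce simp: in_set_conv_nth)
qed

lemma interlaced_even_odd:
  assumes e: "strict_mono e" and xs: "xs \<in> incr_tuples k"
  shows "interlaced k (map (\<lambda>t. e (2*t)) xs) (map (\<lambda>t. e (2*t+1)) xs)"
  unfolding interlaced_def
proof (intro conjI allI impI)
  have "strict_mono (\<lambda>t. e (2*t))" "strict_mono (\<lambda>t. e (2*t+1))"
    using e by (auto simp: strict_mono_def)
  then show "map (\<lambda>t. e (2*t)) xs \<in> incr_tuples k" "map (\<lambda>t. e (2*t+1)) xs \<in> incr_tuples k"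
    using xs by (auto intro: map_incr_tuples)
  have len: "length xs = k"
    using xs by (simp add: incr_tuples_def)
  show "map (\<lambda>t. e (2*t)) xs ! j < map (\<lambda>t. e (2*t+1)) xs ! j" if "j < k" for j
    using that len e by (simp add: strict_mono_less)
  show "map (\<lambda>t. e (2*t+1)) xs ! j < map (\<lambda>t. e (2*t)) xs ! Suc j" if "Suc j < k" for j
  proof -
    have "xs ! j < xs ! Suc j"
      using xs that by (simp add: incr_tuples_def sorted_wrt_iff_nth_less)
    then show ?thesis
      using that len e by (simp add: strict_mono_less)
  qed
qed

lemma HIC_imp_HC: "HIC p lam M d \<Longrightarrow> HC p lam M d"
  unfolding HIC_def HC_def by (metis interlaced_def interlaced_disjoint)

lemma HC_imp_HIC:
  assumes d: "Metric_space M d" and lam: "0 < lam" and HC: "HC p lam M d"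
  shows "HIC p (2 * lam) M d"
  unfolding HIC_def
proof (intro allI impI)
  fix k f assume k: "1 \<le> k" and f: "tuple_lipschitz M d k f"
  define \<delta> where "\<delta> = lam * real k powr inv_exp p * tuple_lip d k f"
  obtain e where e: "strict_mono e" and pattern: "\<And>xs ys \<phi>. xs \<in> incr_tuples k \<Longrightarrow>
      ys \<in> incr_tuples k \<Longrightarrow> set xs \<inter> set ys = {} \<Longrightarrow> strict_mono \<phi> \<Longrightarrow>
      d (f (map (\<lambda>t. e (\<phi> t)) xs)) (f (map (\<lambda>t. e (\<phi> t)) ys)) \<le> \<delta> \<longleftrightarrow> d (f (map e xs)) (f (map e ys)) \<le> \<delta>"
    by (rule Ramsey_disjoint_tuples[where R = "\<lambda>xs ys. d (f xs) (f ys) \<le> \<delta>" and k = k]) blast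
  have "lam * real k powr inv_exp p * tuple_lip d k (f \<circ> map e) \<le> \<delta>"
    unfolding \<delta>_def using tuple_lip_compose_strict_mono[OF e k f] lam by (intro mult_left_mono) auto
  then obtain xs ys where tuples: "xs \<in> incr_tuples k" "ys \<in> incr_tuples k" "set xs \<inter> set ys = {}"
    and close: "d (f (map e xs)) (f (map e ys)) \<le> \<delta>"
    using HC k tuple_lipschitz_compose_strict_mono[OF e f] unfolding HC_def by fastforce
  define a b c where "a = map (\<lambda>t. e (2*t)) xs" and "b = map (\<lambda>t. e (2*t+1)) xs"
    and "c = map (\<lambda>t. e (2*t)) ys"
  define \<phi> where "\<phi> t = (if t \<in> set xs then 2*t+1 else 2*t)" for t :: nat
  have "strict_mono \<phi>"
    by (rule strict_monoI_Suc) (simp add: \<phi>_def)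
  moreover have "map (\<lambda>t. e (\<phi> t)) xs = b" "map (\<lambda>t. e (\<phi> t)) ys = c"
    using tuples(3) by (auto simp: b_def c_def \<phi>_def)
  ultimately have "d (f b) (f c) \<le> \<delta>"
    using pattern[OF tuples] close by metis
  moreover have "d (f a) (f c) \<le> \<delta>"
    using pattern[OF tuples, of "\<lambda>t. 2*t"] close by (simp add: a_def c_def strict_mono_def)
  moreover have "f a \<in> M" "f b \<in> M" "f c \<in> M"
    using f tuples e map_incr_tuples[OF strict_mono_o[OF e]]
    by (auto simp: a_def b_def c_def tuple_lipschitz_def strict_mono_def comp_def)
  ultimately have "d (f a) (f b) \<le> 2 * \<delta>"
    using Metric_space.triangle[OF d, of "f a" "f c" "f b"] Metric_space.commute[OF d, of "f c" "f b"]
    by linarith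
  moreover have "interlaced k a b"
    unfolding a_def b_def by (rule interlaced_even_odd[OF e tuples(1)])
  ultimately show "\<exists>xs ys. interlaced k xs ys \<and>
      d (f xs) (f ys) \<le> 2 * lam * real k powr inv_exp p * tuple_lip d k f"
    unfolding \<delta>_def by (auto simp: mult.assoc)
qed

theorem proposition2:
  fixes p :: ereal and lam :: real and M :: "'a set" and d :: "'a \<Rightarrow> 'a \<Rightarrow> real"
  assumes "1 < p" and "lam > 0" and "Metric_space M d"
  shows "(HIC p lam M d \<longrightarrow> HC p lam M d)
       \<and> (HC p lam M d \<longrightarrow> HIC p (2 * lam) M d)
       \<and> ((\<exists>l>0. HC p l M d) \<longleftrightarrow> (\<exists>l>0. HIC p l M d))"
proof (intro conjI impI)
  show "HIC p lam M d \<Longrightarrow> HC p lam M d" by (rule HIC_imp_HC)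
  show "HC p lam M d \<Longrightarrow> HIC p (2 * lam) M d" by (rule HC_imp_HIC[OF assms(3,2)])
  show "(\<exists>l>0. HC p l M d) \<longleftrightarrow> (\<exists>l>0. HIC p l M d)"
    using HIC_imp_HC HC_imp_HIC[OF assms(3)] by (metis mult_pos_pos zero_less_numeral)
qed

end
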